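(* Let $f:\mathrm{I}\to\mathbb{R}$ be a convex function on an interval $\mathrm{I}\subseteq\mathbb{R}$, let $\Gamma\subseteq\mathcal{M}_b(\mathcal{H})$, let $\P\in\mathcal{P}(\mathcal{H})$ be a fixed distribution (not depending on the sample), let $\delta\in[0,1]$, and for every sample $\mathcal{S}\in\mathcal{Z}^m$ let $\phi_{\mathcal{S}}\in\Gamma$. Assume there exists a function $B^{\P}$ such that for any $\mathcal{S}$ and $\P$, $\Lambda^{\P}_f(\phi_{\mathcal{S}})\le B^{\P}(\phi_{\mathcal{S}})$. Assume moreover the bounded-difference property: there are constants $c_1,\dots,c_m$ such that for all $i\in\{1,\dots,m\}$, \[ \sup_{\mathcal{S}\in\mathcal{Z}^m,\ z_i'\in\mathcal{Z}}\big|B^{\P}(\phi_{\mathcal{S}})-B^{\P}(\phi_{\mathcal{S}'_i})\big|\le c_i, \] where $\mathcal{S}'_i$ is the sample $\mathcal{S}$ with $z_i$ replaced by $z_i'$. Then with probability at least $1-\delta$ over $\mathcal{S}\sim\mathcal{D}^m$, for all $\rho\in\mathcal{P}(\mathcal{H})$, \[ \mathbb{E}_{h\sim\rho}\phi_{\mathcal{S}}(h)\le D^{\Gamma}_f(\rho\|\P)+\mathbb{E}_{\mathcal{S}\sim\mathcal{D}^m}B^{\P}(\phi_{\mathcal{S}})+\sqrt{\frac{\ln\frac{1}{\delta}}{2}\sum_{i=1}^m c_i^2}. \]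
   Context: $\mathcal{H}$ is a hypothesis space, $\mathcal{Z}$ a data space, $\mathcal{D}$ an unknown distribution on $\mathcal{Z}$, and $\mathcal{S}=\{z_1,\dots,z_m\}\sim\mathcal{D}^m$ an i.i.d. sample. $\mathcal{P}(\mathcal{H})$ is the set of probability distributions on $\mathcal{H}$ and $\mathcal{M}_b(\mathcal{H})$ the set of bounded measurable functions $\mathcal{H}\to\mathbb{R}$. $f^*(y)=\sup_{x\in\mathrm{I}}\{xy-f(x)\}$ is the Legendre transform of $f$. For $\varphi\in\mathcal{M}_b(\mathcal{H})$, $\Lambda^{\P}_{f}(\varphi):=\inf_{c\in\mathbb{R}}\{c+\mathbb{E}_{h\sim\P}f^*(\varphi(h)-c)\}$. The $(f,\Gamma)$-divergence is $D^{\Gamma}_f(\rho\|\P):=\sup_{\varphi\in\Gamma}\{\mathbb{E}_{h\sim\rho}\varphi(h)-\Lambda^{\P}_f(\varphi)\}$. *)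

theory Defs
  imports "HOL-Probability.Probability"
begin

definition legendre :: "real set \<Rightarrow> (real \<Rightarrow> real) \<Rightarrow> real \<Rightarrow> ereal" where
  "legendre I f y = (SUP x\<in>I. ereal (x * y - f x))"

text \<open>Expectation of an extended-real valued function (positive part minus negative part).\<close>
definition eexpect :: "'a measure \<Rightarrow> ('a \<Rightarrow> ereal) \<Rightarrow> ereal" where
  "eexpect M g = enn2ereal (\<integral>\<^sup>+ x. e2ennreal (g x) \<partial>M) - enn2ereal (\<integral>\<^sup>+ x. e2ennreal (- g x) \<partial>M)"

definition Lambda_f :: "real set \<Rightarrow> (real \<Rightarrow> real) \<Rightarrow> 'h measure \<Rightarrow> ('h \<Rightarrow> real) \<Rightarrow> ereal" where
  "Lambda_f I f P \<phi> = (INF c::real. ereal c + eexpect P (\<lambda>h. legendre I f (\<phi> h - c)))"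

definition fGamma_div :: "real set \<Rightarrow> (real \<Rightarrow> real) \<Rightarrow> ('h \<Rightarrow> real) set \<Rightarrow> 'h measure \<Rightarrow> 'h measure \<Rightarrow> ereal" where
  "fGamma_div I f \<Gamma> \<rho> P = (SUP \<phi>\<in>\<Gamma>. ereal (\<integral>h. \<phi> h \<partial>\<rho>) - Lambda_f I f P \<phi>)"

definition bounded_measurable :: "'h measure \<Rightarrow> ('h \<Rightarrow> real) set" where
  "bounded_measurable H = {g. g \<in> borel_measurable H \<and> bounded (g ` space H)}"

definition prob_dists :: "'h measure \<Rightarrow> 'h measure set" where
  "prob_dists H = {\<rho>. prob_space \<rho> \<and> sets \<rho> = sets H}"

end

theory Submission
  imports Defs
begin

text \<open>
  For \<open>\<phi> \<in> \<Gamma>\<close> the variational definition of the \<open>(f,\<Gamma>)\<close>-divergence gives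
  \<open>E\<^sub>\<rho> \<phi> \<le> D\<^sup>\<Gamma>\<^sub>f(\<rho>\<parallel>P) + \<Lambda>\<^sup>P\<^sub>f(\<phi>) \<le> D\<^sup>\<Gamma>\<^sub>f(\<rho>\<parallel>P) + B(\<phi>)\<close> simultaneously for all \<open>\<rho>\<close>,
  so only the real random variable \<open>S \<mapsto> B(\<phi>\<^sub>S)\<close> has to be controlled. Its deviation
  above the mean is handled by McDiarmid's bounded-differences inequality, proved by the
  Chernoff method: integrating out one coordinate at a time (the Doob martingale) and
  applying Hoeffding's lemma to each conditional increment bounds the moment generating
  function by \<open>exp (\<lambda>\<^sup>2 \<Sigma> c\<^sub>i\<^sup>2 / 8)\<close>.
\<close>

definition bounded_differences ::
    "'z measure \<Rightarrow> nat \<Rightarrow> (nat \<Rightarrow> real) \<Rightarrow> ((nat \<Rightarrow> 'z) \<Rightarrow> real) \<Rightarrow> bool" where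
  "bounded_differences D n c g \<longleftrightarrow>
     (\<forall>i<n. \<forall>S\<in>space (\<Pi>\<^sub>M j\<in>{..<n}. D). \<forall>z\<in>space D. \<bar>g S - g (S(i := z))\<bar> \<le> c i)"

lemma PiM_fun_upd_in_space:
  assumes "x \<in> space (Pi\<^sub>M I M)" "z \<in> space (M i)"
  shows "x(i := z) \<in> space (Pi\<^sub>M (insert i I) M)"
  using assms by (auto simp: space_PiM PiE_def extensional_def Pi_iff)

lemma (in prob_space) abs_integral_le_const:
  fixes f :: "'a \<Rightarrow> real"
  assumes "f \<in> borel_measurable M" "\<And>x. x \<in> space M \<Longrightarrow> \<bar>f x\<bar> \<le> C"
  shows "\<bar>\<integral>x. f x \<partial>M\<bar> \<le> C"
proof -
  have "integrable M f"
    using assms by (intro integrable_const_bound[where B = C]) auto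
  have "\<bar>\<integral>x. f x \<partial>M\<bar> \<le> (\<integral>x. \<bar>f x\<bar> \<partial>M)"
    using integral_norm_bound[of M f] by simp
  also have "\<dots> \<le> C"
    using \<open>integrable M f\<close> assms(2) by (intro integral_le_const) auto
  finally show ?thesis .
qed

lemma (in prob_space) Hoeffdings_lemma_oscillation:
  assumes [measurable]: "X \<in> borel_measurable M" and l: "l > 0"
    and osc: "\<And>x y. x \<in> space M \<Longrightarrow> y \<in> space M \<Longrightarrow> X x - X y \<le> c"
  shows "(\<integral>\<^sup>+x. ennreal (exp (l * (X x - expectation X))) \<partial>M) \<le> ennreal (exp (l\<^sup>2 * c\<^sup>2 / 8))"
proof -
  obtain y where y: "y \<in> space M" using not_empty by blast
  define a where "a = Inf (X ` space M)"
  have bdd: "bdd_below (X ` space M)"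
    using osc[OF y] by (intro bdd_belowI[where m = "X y - c"]) force
  have "a \<le> X x \<and> X x \<le> a + c" if x: "x \<in> space M" for x
  proof
    show "a \<le> X x" unfolding a_def using x bdd by (intro cInf_lower) auto
    have "X x - c \<le> a" unfolding a_def using x osc by (intro cInf_greatest) (auto simp: algebra_simps)
    then show "X x \<le> a + c" by simp
  qed
  then interpret interval_bounded_random_variable M X a "a + c"
    by unfold_locales auto
  show ?thesis
    using Hoeffdings_lemma_nn_integral[OF l] by simp
qed

lemma bounded_differences_abs_diff_le_sum:
  assumes g: "bounded_differences D n c g"
    and S: "S \<in> space (\<Pi>\<^sub>M i\<in>{..<n}. D)" and S': "S' \<in> space (\<Pi>\<^sub>M i\<in>{..<n}. D)"
  shows "\<bar>g S - g S'\<bar> \<le> (\<Sum>i<n. c i)"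
proof -
  define T where "T k = (\<lambda>i. if i < k then S' i else S i)" for k
  have T: "T k \<in> space (\<Pi>\<^sub>M i\<in>{..<n}. D)" for k
    using S S' by (auto simp: T_def space_PiM PiE_def extensional_def Pi_iff)
  have "\<bar>g S - g (T k)\<bar> \<le> (\<Sum>i<k. c i)" if "k \<le> n" for k
    using that
  proof (induction k)
    case 0
    then show ?case by (simp add: T_def)
  next
    case (Suc k)
    have "T (Suc k) = (T k)(k := S' k)" by (auto simp: T_def)
    moreover have "S' k \<in> space D" using S' Suc.prems by (auto simp: space_PiM PiE_def)
    ultimately have "\<bar>g (T k) - g (T (Suc k))\<bar> \<le> c k"
      using g T Suc.prems by (auto simp: bounded_differences_def)
    then show ?case using Suc by simp
  qed
  moreover have "T n = S'"
    using S S' by (auto simp: T_def space_PiM PiE_def extensional_def)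
  ultimately show ?thesis by fastforce
qed

lemma bounded_differences_bounded:
  assumes "prob_space D" "bounded_differences D n c g"
  obtains K where "\<And>S. S \<in> space (\<Pi>\<^sub>M i\<in>{..<n}. D) \<Longrightarrow> \<bar>g S\<bar> \<le> K"
proof -
  interpret prob_space "\<Pi>\<^sub>M i\<in>{..<n}. D" by (rule prob_space_PiM) (simp add: assms(1))
  obtain S' where "S' \<in> space (\<Pi>\<^sub>M i\<in>{..<n}. D)" using not_empty by blast
  with bounded_differences_abs_diff_le_sum[OF assms(2) _ this] show ?thesis
    by (intro that[of "\<bar>g S'\<bar> + (\<Sum>i<n. c i)"]) force
qed

lemma bounded_differences_section_average:
  assumes D: "prob_space D" and g: "g \<in> borel_measurable (\<Pi>\<^sub>M i\<in>{..<Suc n}. D)"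
    and bd: "bounded_differences D (Suc n) c g"
  shows "bounded_differences D n c (\<lambda>x. \<integral>z. g (x(n := z)) \<partial>D)"
proof -
  interpret D: prob_space D by fact
  obtain K where K: "\<And>S. S \<in> space (\<Pi>\<^sub>M i\<in>{..<Suc n}. D) \<Longrightarrow> \<bar>g S\<bar> \<le> K"
    using bounded_differences_bounded[OF D bd] by blast
  have upd: "x(n := z) \<in> space (\<Pi>\<^sub>M i\<in>{..<Suc n}. D)"
    if "x \<in> space (\<Pi>\<^sub>M i\<in>{..<n}. D)" "z \<in> space D" for x z
    using PiM_fun_upd_in_space[OF that] by (simp add: lessThan_Suc)
  have meas: "(\<lambda>z. g (x(n := z))) \<in> borel_measurable D" if "x \<in> space (\<Pi>\<^sub>M i\<in>{..<n}. D)" for x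
    by (rule measurable_compose[OF measurable_component_update g[unfolded lessThan_Suc]]) (use that in auto)
  have int: "integrable D (\<lambda>z. g (x(n := z)))" if "x \<in> space (\<Pi>\<^sub>M i\<in>{..<n}. D)" for x
    using meas[OF that] K upd[OF that] by (intro D.integrable_const_bound[where B = K]) auto
  show ?thesis
    unfolding bounded_differences_def
  proof (intro allI impI ballI)
    fix i x z' assume i: "i < n" and x: "x \<in> space (\<Pi>\<^sub>M i\<in>{..<n}. D)" and z': "z' \<in> space D"
    have x': "x(i := z') \<in> space (\<Pi>\<^sub>M i\<in>{..<n}. D)"
      using PiM_fun_upd_in_space[OF x, of z' i] z' i by (simp add: insert_absorb)
    have "(\<integral>z. g (x(n := z)) \<partial>D) - (\<integral>z. g ((x(i := z'))(n := z)) \<partial>D)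
        = (\<integral>z. g (x(n := z)) - g ((x(n := z))(i := z')) \<partial>D)"
      using int[OF x] int[OF x'] i by (simp add: fun_upd_twist)
    also have "\<bar>\<dots>\<bar> \<le> c i"
    proof (rule D.abs_integral_le_const)
      show "(\<lambda>z. g (x(n := z)) - g ((x(n := z))(i := z'))) \<in> borel_measurable D"
        using meas[OF x] meas[OF x'] i by (simp add: fun_upd_twist)
      show "\<bar>g (x(n := z)) - g ((x(n := z))(i := z'))\<bar> \<le> c i" if "z \<in> space D" for z
        using bd upd[OF x that] z' i unfolding bounded_differences_def by simp
    qed
    finally show "\<bar>(\<integral>z. g (x(n := z)) \<partial>D) - (\<integral>z. g ((x(i := z'))(n := z)) \<partial>D)\<bar> \<le> c i" .
  qed
qed

lemma mcdiarmid_mgf: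
  assumes D: "prob_space D" and l: "l > 0"
    and "g \<in> borel_measurable (\<Pi>\<^sub>M i\<in>{..<n}. D)" and "bounded_differences D n c g"
  shows "(\<integral>\<^sup>+S. ennreal (exp (l * (g S - (\<integral>S'. g S' \<partial>\<Pi>\<^sub>M i\<in>{..<n}. D)))) \<partial>\<Pi>\<^sub>M i\<in>{..<n}. D)
      \<le> ennreal (exp (l\<^sup>2 * (\<Sum>i<n. (c i)\<^sup>2) / 8))"
  using assms(3,4)
proof (induction n arbitrary: g)
  case 0
  then show ?case by (simp add: PiM_empty lebesgue_integral_count_space_finite nn_integral_count_space_finite)
next
  case (Suc n)
  interpret D: prob_space D by fact
  interpret product_prob_space "\<lambda>_::nat. D"
    by unfold_locales
  let ?M = "\<Pi>\<^sub>M i\<in>{..<n}. D"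
  let ?M' = "\<Pi>\<^sub>M i\<in>insert n {..<n}. D"
  note g_meas[measurable] = Suc.prems(1)[unfolded lessThan_Suc]
  define h where "h x = (\<integral>z. g (x(n := z)) \<partial>D)" for x
  have h_meas[measurable]: "h \<in> borel_measurable ?M"
    unfolding h_def by (rule D.borel_measurable_lebesgue_integral) measurable
  have IH: "(\<integral>\<^sup>+x. ennreal (exp (l * (h x - (\<integral>x'. h x' \<partial>?M)))) \<partial>?M)
      \<le> ennreal (exp (l\<^sup>2 * (\<Sum>i<n. (c i)\<^sup>2) / 8))"
    using Suc.IH[OF h_meas] bounded_differences_section_average[OF D Suc.prems] by (simp add: h_def)
  obtain K where K: "\<And>S. S \<in> space ?M' \<Longrightarrow> \<bar>g S\<bar> \<le> K"
    using bounded_differences_bounded[OF D Suc.prems(2)] by (auto simp: lessThan_Suc)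
  interpret M': prob_space ?M' by (rule prob_space_PiM) (rule D)
  have "integrable ?M' g"
    using K by (intro M'.integrable_const_bound[where B = K]) auto
  then have expectation_h: "(\<integral>S. g S \<partial>?M') = (\<integral>x. h x \<partial>?M)"
    unfolding h_def by (intro product_integral_insert) auto
  have section_mgf: "(\<integral>\<^sup>+z. ennreal (exp (l * (g (x(n := z)) - h x))) \<partial>D) \<le> ennreal (exp (l\<^sup>2 * (c n)\<^sup>2 / 8))"
    if x: "x \<in> space ?M" for x
    unfolding h_def
  proof (rule D.Hoeffdings_lemma_oscillation[OF _ l])
    show "(\<lambda>z. g (x(n := z))) \<in> borel_measurable D"
      using x by measurable
    fix z z' assume "z \<in> space D" "z' \<in> space D"
    then show "g (x(n := z)) - g (x(n := z')) \<le> c n"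
      using Suc.prems(2) PiM_fun_upd_in_space[OF x, of z' n]
      unfolding bounded_differences_def lessThan_Suc by fastforce
  qed
  have "(\<integral>\<^sup>+S. ennreal (exp (l * (g S - (\<integral>S'. g S' \<partial>?M')))) \<partial>?M')
      = (\<integral>\<^sup>+x. (\<integral>\<^sup>+z. ennreal (exp (l * (h x - (\<integral>x'. h x' \<partial>?M))))
                     * ennreal (exp (l * (g (x(n := z)) - h x))) \<partial>D) \<partial>?M)"
    unfolding expectation_h
    by (subst product_nn_integral_insert)
       (auto intro!: nn_integral_cong simp: ennreal_mult[symmetric] exp_add[symmetric] algebra_simps)
  also have "\<dots> = (\<integral>\<^sup>+x. ennreal (exp (l * (h x - (\<integral>x'. h x' \<partial>?M))))
                     * (\<integral>\<^sup>+z. ennreal (exp (l * (g (x(n := z)) - h x))) \<partial>D) \<partial>?M)"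
    by (intro nn_integral_cong nn_integral_cmult) measurable
  also have "\<dots> \<le> (\<integral>\<^sup>+x. ennreal (exp (l * (h x - (\<integral>x'. h x' \<partial>?M))))
                     * ennreal (exp (l\<^sup>2 * (c n)\<^sup>2 / 8)) \<partial>?M)"
    by (intro nn_integral_mono mult_left_mono section_mgf) auto
  also have "\<dots> = (\<integral>\<^sup>+x. ennreal (exp (l * (h x - (\<integral>x'. h x' \<partial>?M)))) \<partial>?M)
                     * ennreal (exp (l\<^sup>2 * (c n)\<^sup>2 / 8))"
    by (rule nn_integral_multc) measurable
  also have "\<dots> \<le> ennreal (exp (l\<^sup>2 * (\<Sum>i<n. (c i)\<^sup>2) / 8)) * ennreal (exp (l\<^sup>2 * (c n)\<^sup>2 / 8))"
    by (intro mult_right_mono IH) auto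
  also have "\<dots> = ennreal (exp (l\<^sup>2 * (\<Sum>i<Suc n. (c i)\<^sup>2) / 8))"
    by (simp add: ennreal_mult[symmetric] exp_add[symmetric] add_divide_distrib distrib_left)
  finally show ?case by (simp add: lessThan_Suc)
qed

lemma mcdiarmid_inequality:
  assumes D: "prob_space D" and g[measurable]: "g \<in> borel_measurable (\<Pi>\<^sub>M i\<in>{..<n}. D)"
    and bd: "bounded_differences D n c g" and t: "t > 0" and C: "(\<Sum>i<n. (c i)\<^sup>2) > 0"
  shows "measure (\<Pi>\<^sub>M i\<in>{..<n}. D)
           {S \<in> space (\<Pi>\<^sub>M i\<in>{..<n}. D). t \<le> g S - (\<integral>S'. g S' \<partial>\<Pi>\<^sub>M i\<in>{..<n}. D)}
         \<le> exp (-2 * t\<^sup>2 / (\<Sum>i<n. (c i)\<^sup>2))"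
proof -
  let ?M = "\<Pi>\<^sub>M i\<in>{..<n}. D"
  interpret prob_space ?M by (rule prob_space_PiM) (rule D)
  define C where "C = (\<Sum>i<n. (c i)\<^sup>2)"
  define E where "E = (\<integral>S'. g S' \<partial>?M)"
  define l where "l = 4 * t / C" \<comment> \<open>the minimiser of \<open>l\<^sup>2 C / 8 - l t\<close>\<close>
  have l: "l > 0" using t C by (simp add: l_def C_def)
  have "ennreal (measure ?M {S \<in> space ?M. t \<le> g S - E}) = emeasure ?M {S \<in> space ?M. t \<le> g S - E}"
    by (simp add: emeasure_eq_measure)
  also have "\<dots> \<le> ennreal (exp (- l * t)) * (\<integral>\<^sup>+S. ennreal (exp (l * (g S - E))) * indicator (space ?M) S \<partial>?M)"
    by (intro Chernoff_ineq_nn_integral_ge l) auto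
  also have "(\<integral>\<^sup>+S. ennreal (exp (l * (g S - E))) * indicator (space ?M) S \<partial>?M)
      = (\<integral>\<^sup>+S. ennreal (exp (l * (g S - E))) \<partial>?M)"
    by (intro nn_integral_cong) auto
  also have "\<dots> \<le> ennreal (exp (l\<^sup>2 * C / 8))"
    unfolding E_def C_def by (rule mcdiarmid_mgf[OF D l g bd])
  also have "ennreal (exp (- l * t)) * ennreal (exp (l\<^sup>2 * C / 8)) = ennreal (exp (-2 * t\<^sup>2 / C))"
    using C by (simp add: ennreal_mult[symmetric] exp_add[symmetric] l_def C_def field_simps power2_eq_square)
  finally show ?thesis
    by (simp add: mult_left_mono E_def C_def ennreal_le_iff)
qed

lemma mcdiarmid_deviation_bound:
  assumes D: "prob_space D" and g[measurable]: "g \<in> borel_measurable (\<Pi>\<^sub>M i\<in>{..<n}. D)"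
    and bd: "bounded_differences D n c g" and \<delta>: "0 < \<delta>" "\<delta> \<le> 1"
  shows "1 - \<delta> \<le> measure (\<Pi>\<^sub>M i\<in>{..<n}. D) {S \<in> space (\<Pi>\<^sub>M i\<in>{..<n}. D).
           g S \<le> (\<integral>S'. g S' \<partial>\<Pi>\<^sub>M i\<in>{..<n}. D) + sqrt (ln (1 / \<delta>) / 2 * (\<Sum>i<n. (c i)\<^sup>2))}"
proof -
  let ?M = "\<Pi>\<^sub>M i\<in>{..<n}. D"
  interpret prob_space ?M by (rule prob_space_PiM) (rule D)
  define C where "C = (\<Sum>i<n. (c i)\<^sup>2)"
  define E where "E = (\<integral>S'. g S' \<partial>?M)"
  define t where "t = sqrt (ln (1 / \<delta>) / 2 * C)"
  define A where "A = {S \<in> space ?M. g S \<le> E + t}"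
  have "C \<ge> 0" unfolding C_def by (intro sum_nonneg) auto
  have "ln (1 / \<delta>) \<ge> 0" using \<delta> by simp
  have "measure ?M (space ?M - A) \<le> \<delta>"
  proof -
    consider "C = 0" | "\<delta> = 1" | "C > 0" "\<delta> < 1"
      using \<open>C \<ge> 0\<close> \<delta> by linarith
    then show ?thesis
    proof cases
      case 1
      then have "c i = 0" if "i < n" for i
        using that by (simp add: C_def sum_nonneg_eq_0_iff)
      obtain S0 where S0: "S0 \<in> space ?M" using not_empty by blast
      have g_const: "g S = g S0" if "S \<in> space ?M" for S
        using bounded_differences_abs_diff_le_sum[OF bd that S0] \<open>\<And>i. i < n \<Longrightarrow> c i = 0\<close> by simp
      have "E = (\<integral>S. g S0 \<partial>?M)"
        unfolding E_def by (intro Bochner_Integration.integral_cong) (auto simp: g_const)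
      also have "\<dots> = g S0"
        by (simp add: prob_space)
      finally have "E = g S0" .
      moreover have "t \<ge> 0"
        using \<open>C \<ge> 0\<close> \<open>ln (1 / \<delta>) \<ge> 0\<close> by (simp add: t_def)
      ultimately have "space ?M - A = {}"
        using g_const by (auto simp: A_def)
      then show ?thesis
        using \<delta> by (metis measure_empty less_imp_le)
    next
      case 2
      then show ?thesis by simp
    next
      case 3
      then have "t > 0"
        using \<delta> by (simp add: t_def)
      have "measure ?M (space ?M - A) \<le> measure ?M {S \<in> space ?M. t \<le> g S - E}"
        by (intro finite_measure_mono) (auto simp: A_def)
      also have "\<dots> \<le> exp (-2 * t\<^sup>2 / C)"
        unfolding E_def C_def by (rule mcdiarmid_inequality[OF D g bd \<open>t > 0\<close>]) (use 3 in \<open>simp add: C_def\<close>)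
      also have "t\<^sup>2 = ln (1 / \<delta>) / 2 * C"
        using \<open>C \<ge> 0\<close> \<open>ln (1 / \<delta>) \<ge> 0\<close> by (simp add: t_def)
      also have "-2 * (ln (1 / \<delta>) / 2 * C) / C = ln \<delta>"
        using 3 \<delta> by (simp add: ln_div)
      finally show ?thesis
        using \<delta> by simp
    qed
  qed
  then show ?thesis
    using prob_compl[of A] by (simp add: A_def E_def t_def C_def)
qed

lemma integral_le_fGamma_div_add:
  assumes "\<phi> \<in> \<Gamma>" and "Lambda_f I f P \<phi> \<le> ereal b"
  shows "ereal (\<integral>h. \<phi> h \<partial>\<rho>) \<le> fGamma_div I f \<Gamma> \<rho> P + ereal b"
proof -
  have "ereal (\<integral>h. \<phi> h \<partial>\<rho>) - ereal b \<le> ereal (\<integral>h. \<phi> h \<partial>\<rho>) - Lambda_f I f P \<phi>"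
    using assms(2) by (intro ereal_minus_mono) auto
  also have "\<dots> \<le> fGamma_div I f \<Gamma> \<rho> P"
    unfolding fGamma_div_def using assms(1) by (rule SUP_upper)
  finally show ?thesis
    by (cases "fGamma_div I f \<Gamma> \<rho> P") auto
qed

theorem theorem3p2:
  fixes H :: "'h measure" and D :: "'z measure" and m :: nat
    and f :: "real \<Rightarrow> real" and I :: "real set"
    and \<Gamma> :: "('h \<Rightarrow> real) set" and P :: "'h measure" and \<delta> :: real
    and \<phi> :: "(nat \<Rightarrow> 'z) \<Rightarrow> 'h \<Rightarrow> real"
    and B :: "('h \<Rightarrow> real) \<Rightarrow> real" and c :: "nat \<Rightarrow> real"
  assumes D: "prob_space D"
    and I: "is_interval I" and f: "convex_on I f"
    and Gamma: "\<Gamma> \<subseteq> bounded_measurable H"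
    and P: "P \<in> prob_dists H"
    and delta: "0 < \<delta>" "\<delta> \<le> 1"
    and phi: "\<And>S. S \<in> space (PiM {..<m} (\<lambda>_. D)) \<Longrightarrow> \<phi> S \<in> \<Gamma>"
    and B_bound: "\<And>S. S \<in> space (PiM {..<m} (\<lambda>_. D)) \<Longrightarrow> Lambda_f I f P (\<phi> S) \<le> ereal (B (\<phi> S))"
    and B_meas: "(\<lambda>S. B (\<phi> S)) \<in> borel_measurable (PiM {..<m} (\<lambda>_. D))"
    and bdd_diff: "\<And>i S z'. i < m \<Longrightarrow> S \<in> space (PiM {..<m} (\<lambda>_. D)) \<Longrightarrow> z' \<in> space D \<Longrightarrow>
        \<bar>B (\<phi> S) - B (\<phi> (S(i := z')))\<bar> \<le> c i"
  shows "\<exists>A \<in> sets (PiM {..<m} (\<lambda>_. D)).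
           measure (PiM {..<m} (\<lambda>_. D)) A \<ge> 1 - \<delta> \<and>
           (\<forall>S\<in>A. \<forall>\<rho>\<in>prob_dists H.
              ereal (\<integral>h. \<phi> S h \<partial>\<rho>)
              \<le> fGamma_div I f \<Gamma> \<rho> P
                 + ereal (\<integral>S'. B (\<phi> S') \<partial>(PiM {..<m} (\<lambda>_. D)))
                 + ereal (sqrt (ln (1 / \<delta>) / 2 * (\<Sum>i<m. (c i)\<^sup>2))))"
proof -
  let ?M = "\<Pi>\<^sub>M i\<in>{..<m}. D"
  define bound where "bound = (\<integral>S'. B (\<phi> S') \<partial>?M) + sqrt (ln (1 / \<delta>) / 2 * (\<Sum>i<m. (c i)\<^sup>2))"
  define A where "A = {S \<in> space ?M. B (\<phi> S) \<le> bound}"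
  have "bounded_differences D m c (\<lambda>S. B (\<phi> S))"
    using bdd_diff by (simp add: bounded_differences_def)
  then have "1 - \<delta> \<le> measure ?M A"
    unfolding A_def bound_def by (rule mcdiarmid_deviation_bound[OF D B_meas _ delta])
  moreover have "A \<in> sets ?M"
    unfolding A_def using B_meas by measurable
  moreover have "ereal (\<integral>h. \<phi> S h \<partial>\<rho>) \<le> fGamma_div I f \<Gamma> \<rho> P + ereal bound" if "S \<in> A" for S \<rho>
  proof -
    have "S \<in> space ?M" using that by (simp add: A_def)
    then have "ereal (\<integral>h. \<phi> S h \<partial>\<rho>) \<le> fGamma_div I f \<Gamma> \<rho> P + ereal (B (\<phi> S))"
      by (intro integral_le_fGamma_div_add phi B_bound)
    also have "\<dots> \<le> fGamma_div I f \<Gamma> \<rho> P + ereal bound"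
      using that by (intro add_left_mono) (simp add: A_def)
    finally show ?thesis .
  qed
  ultimately show ?thesis
    by (auto simp: bound_def add.assoc)
qed

end
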